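(* Let $(\mathcal E_1,\mathcal M_1)$ be an augmentation of a network $(\mathcal E_0,\mathcal M_0)$, and assume $(\mathcal E_0,\mathcal M_0)$ is regular. Assume there exists a partial child selection $J^\vee:\mathcal M_1\setminus\mathcal M_0\to\mathcal E_1\setminus\mathcal E_0$ in the augmented network (injective, with $m\vdash J^\vee(m)$ in $(\mathcal E_1,\mathcal M_1)$ for all $m$) such that the square submatrix of $S_1$ with rows $\mathcal M_1\setminus\mathcal M_0$ and columns $J^\vee(\mathcal M_1\setminus\mathcal M_0)$ is nonsingular. (If $\mathcal M_1=\mathcal M_0$, this condition is vacuous.) Then $(\mathcal E_1,\mathcal M_1)$ is regular, and every influence $j^*\leadsto\alpha$ with $j^*\in\mathcal E_0$, $\alpha\in\mathcal E_0\cup\mathcal M_0$ that holds in $(\mathcal E_0,\mathcal M_0)$ also holds in $(\mathcal E_1,\mathcal M_1)$.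
   Context: A reaction network $(\mathcal E,\mathcal M)$ consists of a finite set of metabolites $\mathcal M$ and a finite set of reactions $\mathcal E$; each reaction $j$ has input and output stoichiometric vectors $y^j,\bar y^j\in\mathbb R_{\ge0}^{\mathcal M}$; $m\vdash j$ iff $y^j_m\ne0$. The stoichiometric matrix $S$ ($\mathcal M\times\mathcal E$) has columns $S^j=\bar y^j-y^j$. The rate matrix $R=(r_{jm})$ ($\mathcal E\times\mathcal M$) has independent indeterminates $r_{jm}$ for $m\vdash j$ and zeros otherwise. "Nonzero algebraically" means nonzero as a polynomial/rational function in these indeterminates. The network is regular if $S$ has full row rank and $\det(SR)\neq0$ algebraically. Let $B=\begin{pmatrix}-\mathrm{id}_{\mathcal E}&R\\ S&0\end{pmatrix}$ (indexed by $\mathcal E\sqcup\mathcal M$); for $\alpha\in\mathcal E\sqcup\mathcal M$ set $z^\alpha=-B^{-1}e_\alpha$ and write $\alpha\leadsto\beta$ if $z^\alpha_\beta$ is nonzero algebraically (this relation is relative to the network considered). A network $(\mathcal E_1,\mathcal M_1)$ is an augmentation of $(\mathcal E_0,\mathcal M_0)$ if $\mathcal E_1\supseteq\mathcal E_0$, $\mathcal M_1\supseteq\mathcal M_0$, and for every $j\in\mathcal E_0$ the stoichiometric vectors $y^j,\bar y^j$ in $(\mathcal E_1,\mathcal M_1)$ coincide with those in $(\mathcal E_0,\mathcal M_0)$ padded by zeros on $\mathcal M_1\setminus\mathcal M_0$; in particular the stoichiometric matrices satisfy $S_0=(S_1)^{\mathcal E_0}_{\mathcal M_0}$ and $(S_1)^{\mathcal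 E_0}_{\mathcal M_1\setminus\mathcal M_0}=0$. *)

theory Defs
  imports "HOL-Analysis.Analysis"
begin

text \<open>A reaction network is given by a finite set of reactions E, a finite set of
metabolites M, and input/output stoichiometric coefficients y j m, yb j m
(meaningful only for j in E, m in M).\<close>

definition network :: "'e set \<Rightarrow> 'm set \<Rightarrow> ('e \<Rightarrow> 'm \<Rightarrow> real) \<Rightarrow> ('e \<Rightarrow> 'm \<Rightarrow> real) \<Rightarrow> bool" where
  "network E M y yb \<longleftrightarrow> finite E \<and> finite M \<and>
     (\<forall>j\<in>E. \<forall>m\<in>M. 0 \<le> y j m \<and> 0 \<le> yb j m)"

definition vdash :: "('e \<Rightarrow> 'm \<Rightarrow> real) \<Rightarrow> 'm \<Rightarrow> 'e \<Rightarrow> bool" where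
  "vdash y m j \<longleftrightarrow> y j m \<noteq> 0"

definition stoich :: "('e \<Rightarrow> 'm \<Rightarrow> real) \<Rightarrow> ('e \<Rightarrow> 'm \<Rightarrow> real) \<Rightarrow> 'm \<Rightarrow> 'e \<Rightarrow> real" where
  "stoich y yb m j = yb j m - y j m"

definition det_on :: "'a set \<Rightarrow> ('a \<Rightarrow> 'a \<Rightarrow> real) \<Rightarrow> real" where
  "det_on A f = (\<Sum>p | p permutes A. of_int (sign p) * (\<Prod>i\<in>A. f i (p i)))"

text \<open>A real assignment of the indeterminates r_{jm}: arbitrary for m \<turnstile> j,
zero otherwise.  A polynomial/rational function in the r_{jm} is nonzero
algebraically iff it is nonzero at some such real assignment (where defined).\<close>
definition rate_assign :: "'e set \<Rightarrow> 'm set \<Rightarrow> ('e \<Rightarrow> 'm \<Rightarrow> real) \<Rightarrow> ('e \<Rightarrow> 'm \<Rightarrow> real) \<Rightarrow> bool" where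
  "rate_assign E M y r \<longleftrightarrow> (\<forall>j m. \<not> (j \<in> E \<and> m \<in> M \<and> vdash y m j) \<longrightarrow> r j m = 0)"

definition full_row_rank :: "'e set \<Rightarrow> 'm set \<Rightarrow> ('m \<Rightarrow> 'e \<Rightarrow> real) \<Rightarrow> bool" where
  "full_row_rank E M S \<longleftrightarrow>
     (\<forall>c. (\<forall>j\<in>E. (\<Sum>m\<in>M. c m * S m j) = 0) \<longrightarrow> (\<forall>m\<in>M. c m = 0))"

definition regular :: "'e set \<Rightarrow> 'm set \<Rightarrow> ('e \<Rightarrow> 'm \<Rightarrow> real) \<Rightarrow> ('e \<Rightarrow> 'm \<Rightarrow> real) \<Rightarrow> bool" where
  "regular E M y yb \<longleftrightarrow> full_row_rank E M (stoich y yb) \<and>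
     (\<exists>r. rate_assign E M y r \<and>
        det_on M (\<lambda>m m'. \<Sum>j\<in>E. stoich y yb m j * r j m') \<noteq> 0)"

text \<open>The matrix B = ((-id, R), (S, 0)) indexed by E \<sqcup> M (as Inl ` E \<union> Inr ` M).\<close>
fun Bmat :: "('e \<Rightarrow> 'm \<Rightarrow> real) \<Rightarrow> ('e \<Rightarrow> 'm \<Rightarrow> real) \<Rightarrow> ('e \<Rightarrow> 'm \<Rightarrow> real)
              \<Rightarrow> 'e + 'm \<Rightarrow> 'e + 'm \<Rightarrow> real" where
  "Bmat y yb r (Inl j) (Inl j') = (if j = j' then -1 else 0)"
| "Bmat y yb r (Inl j) (Inr m) = r j m"
| "Bmat y yb r (Inr m) (Inl j) = stoich y yb m j"
| "Bmat y yb r (Inr m) (Inr m') = 0"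

text \<open>alpha \<leadsto> beta: the entry beta of z^alpha = -B^{-1} e_alpha (i.e. the unique
solution of B z = -e_alpha) is nonzero algebraically, i.e. nonzero at some
real assignment of the r_{jm} at which B is invertible.\<close>
definition influence :: "'e set \<Rightarrow> 'm set \<Rightarrow> ('e \<Rightarrow> 'm \<Rightarrow> real) \<Rightarrow> ('e \<Rightarrow> 'm \<Rightarrow> real)
                         \<Rightarrow> 'e + 'm \<Rightarrow> 'e + 'm \<Rightarrow> bool" where
  "influence E M y yb \<alpha> \<beta> \<longleftrightarrow> \<alpha> \<in> E <+> M \<and> \<beta> \<in> E <+> M \<and>
     (\<exists>r. rate_assign E M y r \<and> det_on (E <+> M) (Bmat y yb r) \<noteq> 0 \<and>
        (\<forall>z. (\<forall>\<gamma>\<in>E <+> M. (\<Sum>\<delta>\<in>E <+> M. Bmat y yb r \<gamma> \<delta> * z \<delta>) = (if \<gamma> = \<alpha> then -1 else 0))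
             \<longrightarrow> z \<beta> \<noteq> 0))"

definition augmentation ::
  "'e set \<Rightarrow> 'm set \<Rightarrow> ('e \<Rightarrow> 'm \<Rightarrow> real) \<Rightarrow> ('e \<Rightarrow> 'm \<Rightarrow> real) \<Rightarrow>
   'e set \<Rightarrow> 'm set \<Rightarrow> ('e \<Rightarrow> 'm \<Rightarrow> real) \<Rightarrow> ('e \<Rightarrow> 'm \<Rightarrow> real) \<Rightarrow> bool" where
  "augmentation E1 M1 y1 yb1 E0 M0 y0 yb0 \<longleftrightarrow> E0 \<subseteq> E1 \<and> M0 \<subseteq> M1 \<and>
     (\<forall>j\<in>E0. \<forall>m\<in>M0. y1 j m = y0 j m \<and> yb1 j m = yb0 j m) \<and>
     (\<forall>j\<in>E0. \<forall>m\<in>M1 - M0. y1 j m = 0 \<and> yb1 j m = 0)"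

definition partial_child_selection ::
  "'e set \<Rightarrow> 'm set \<Rightarrow> ('e \<Rightarrow> 'm \<Rightarrow> real) \<Rightarrow> 'e set \<Rightarrow> 'm set \<Rightarrow> ('m \<Rightarrow> 'e) \<Rightarrow> bool" where
  "partial_child_selection E1 M1 y1 E0 M0 J \<longleftrightarrow>
     inj_on J (M1 - M0) \<and> J ` (M1 - M0) \<subseteq> E1 - E0 \<and> (\<forall>m\<in>M1 - M0. vdash y1 m (J m))"

end

theory Submission
  imports Defs "Jordan_Normal_Form.Determinant"
begin

text \<open>Give the augmented network the old rates together with \<open>r (J m) m = 1\<close> for every new
metabolite \<open>m\<close>. Listing old coordinates before new ones, both \<open>S1 R1\<close> and \<open>B1\<close> become block
upper triangular. Their old diagonal blocks are \<open>S0 R0\<close> and \<open>B0\<close>; the new diagonal block of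
\<open>S1 R1\<close> is the child block of \<open>S1\<close> (rows \<open>M1 - M0\<close>, columns \<open>J ` (M1 - M0)\<close>), and that of
\<open>B1\<close> reduces to it after eliminating the new reactions. Hence both matrices are nonsingular.
Moreover a right-hand side supported on old coordinates has a solution supported on old
coordinates, so \<open>-B1\<^sup>-\<^sup>1 e\<^sub>j\<close> restricts to \<open>-B0\<^sup>-\<^sup>1 e\<^sub>j\<close> and every nonzero entry survives. Full row
rank of \<open>S1\<close> follows in the same way from that of \<open>S0\<close> and the nonsingular child block.\<close>

lemma det_on_cong:
  assumes "\<And>i j. i \<in> A \<Longrightarrow> j \<in> A \<Longrightarrow> f i j = g i j"
  shows "det_on A f = det_on A g"
  unfolding det_on_def
  by (intro sum.cong refl arg_cong[where f="(*) _"] prod.cong) (auto simp: assms permutes_in_image)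

lemma det_on_transpose:
  assumes "finite A"
  shows "det_on A (\<lambda>i j. f j i) = det_on A f"
proof -
  have "det_on A (\<lambda>i j. f j i) = (\<Sum>p | p permutes A. of_int (sign (Hilbert_Choice.inv p)) * (\<Prod>i\<in>A. f i (Hilbert_Choice.inv p i)))"
    unfolding det_on_def
    by (intro sum.cong refl) (simp add: prod.permutes_inv sign_inverse permutes_imp_permutation[OF assms])
  also have "\<dots> = det_on A f"
    unfolding det_on_def by (rule sum_permutations_inverse[symmetric])
  finally show ?thesis .
qed

lemma det_on_reindex:
  assumes e: "bij_betw e A B" and "finite A"
  shows "det_on B f = det_on A (\<lambda>i j. f (e i) (e j))"
proof -
  have inj: "inj_on e A" and B: "B = e ` A"
    using e by (auto simp: bij_betw_def)
  have e': "bij_betw (inv_into A e) B A"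
    using e by (rule bij_betw_inv_into)
  have "det_on A (\<lambda>i j. f (e i) (e j)) = det_on B f"
    unfolding det_on_def
  proof (rule sum.reindex_bij_witness[where j = "map_permutation A e" and i = "map_permutation B (inv_into A e)"])
    fix p assume "p \<in> {p. p permutes A}"
    then have p: "p permutes A" by simp
    then show "map_permutation B (inv_into A e) (map_permutation A e p) = p"
      using e inj by (intro map_permutation_compose_inv) auto
    show "map_permutation A e p \<in> {p. p permutes B}"
      using map_permutation_permutes[OF e p] by simp
    have "(\<Prod>x\<in>B. f x (map_permutation A e p x)) = (\<Prod>i\<in>A. f (e i) (map_permutation A e p (e i)))"
      using prod.reindex_bij_betw[OF e, symmetric] .
    also have "\<dots> = (\<Prod>i\<in>A. f (e i) (e (p i)))"
      using inj by (intro prod.cong refl) (simp add: map_permutation_apply)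
    finally show "of_int (sign (map_permutation A e p)) * (\<Prod>x\<in>B. f x (map_permutation A e p x))
        = of_int (sign p) * (\<Prod>i\<in>A. f (e i) (e (p i)))"
      using sign_map_permutation[OF inj p \<open>finite A\<close>] by simp
  next
    fix q assume "q \<in> {q. q permutes B}"
    then have q: "q permutes B" by simp
    then show "map_permutation A e (map_permutation B (inv_into A e) q) = q"
      using e' B by (intro map_permutation_compose_inv) (auto simp: f_inv_into_f)
    show "map_permutation B (inv_into A e) q \<in> {p. p permutes A}"
      using map_permutation_permutes[OF e' q] by simp
  qed
  then show ?thesis ..
qed

lemma det_on_atLeastLessThan:
  fixes n :: nat
  shows "det_on {0..<n} f = Determinant.det (Matrix.mat n n (\<lambda>(i, j). f i j))"
  by (subst det_def'[of _ n]) (auto simp: det_on_def permutes_in_image intro!: sum.cong prod.cong)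

definition trivial_kernel_on :: "'a set \<Rightarrow> ('a \<Rightarrow> 'a \<Rightarrow> real) \<Rightarrow> bool" where
  "trivial_kernel_on A f \<longleftrightarrow> (\<forall>z. (\<forall>i\<in>A. (\<Sum>j\<in>A. f i j * z j) = 0) \<longrightarrow> (\<forall>j\<in>A. z j = 0))"

lemma trivial_kernel_onD:
  "trivial_kernel_on A f \<Longrightarrow> (\<And>i. i \<in> A \<Longrightarrow> (\<Sum>j\<in>A. f i j * z j) = 0) \<Longrightarrow> j \<in> A \<Longrightarrow> z j = 0"
  unfolding trivial_kernel_on_def by blast

lemma trivial_kernel_on_reindex:
  assumes e: "bij_betw e A B"
  shows "trivial_kernel_on B f \<longleftrightarrow> trivial_kernel_on A (\<lambda>i j. f (e i) (e j))"
proof -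
  have B: "B = e ` A" and e_inv: "\<And>i. i \<in> A \<Longrightarrow> inv_into A e (e i) = i"
    using e by (auto simp: bij_betw_def bij_betw_inv_into_left)
  have sum_e: "(\<Sum>j\<in>A. f x (e j) * z (e j)) = (\<Sum>y\<in>B. f x y * z y)" for x z
    using sum.reindex_bij_betw[OF e] .
  show ?thesis
  proof
    assume ker: "trivial_kernel_on B f"
    show "trivial_kernel_on A (\<lambda>i j. f (e i) (e j))"
      unfolding trivial_kernel_on_def
    proof (intro allI impI ballI)
      fix z j assume "\<forall>i\<in>A. (\<Sum>j\<in>A. f (e i) (e j) * z j) = 0" and j: "j \<in> A"
      then have "\<forall>i\<in>A. (\<Sum>j\<in>A. f (e i) (e j) * z (inv_into A e (e j))) = 0"
        by (simp add: e_inv)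
      then have "\<forall>i\<in>A. (\<Sum>y\<in>B. f (e i) y * z (inv_into A e y)) = 0"
        by (simp only: sum_e[of _ "\<lambda>y. z (inv_into A e y)"])
      then have "\<forall>x\<in>B. (\<Sum>y\<in>B. f x y * z (inv_into A e y)) = 0"
        unfolding B by blast
      then have "z (inv_into A e (e j)) = 0"
        using ker j B by (auto simp: trivial_kernel_on_def)
      then show "z j = 0" by (simp add: e_inv j)
    qed
  next
    assume ker: "trivial_kernel_on A (\<lambda>i j. f (e i) (e j))"
    show "trivial_kernel_on B f"
      unfolding trivial_kernel_on_def
    proof (intro allI impI ballI)
      fix z y assume "\<forall>x\<in>B. (\<Sum>y\<in>B. f x y * z y) = 0" and y: "y \<in> B"
      then have "\<forall>i\<in>A. (\<Sum>j\<in>A. f (e i) (e j) * z (e j)) = 0"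
        unfolding sum_e[of _ z] B by blast
      then have "\<forall>j\<in>A. z (e j) = 0"
        using ker[unfolded trivial_kernel_on_def, THEN spec, of "\<lambda>j. z (e j)"] by simp
      then show "z y = 0"
        using y B by blast
    qed
  qed
qed

lemma det_on_atLeastLessThan_nonzero_iff:
  fixes n :: nat
  shows "det_on {0..<n} f \<noteq> 0 \<longleftrightarrow> trivial_kernel_on {0..<n} f"
proof -
  let ?M = "Matrix.mat n n (\<lambda>(i, j). f i j)"
  have mult: "?M *\<^sub>v v = Matrix.vec n (\<lambda>i. \<Sum>j\<in>{0..<n}. f i j * v $ j)" if "v \<in> carrier_vec n" for v
    using that by (intro eq_vecI) (auto simp: scalar_prod_def)
  have "det_on {0..<n} f = 0 \<longleftrightarrow> (\<exists>v. v \<in> carrier_vec n \<and> v \<noteq> 0\<^sub>v n \<and> ?M *\<^sub>v v = 0\<^sub>v n)"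
    unfolding det_on_atLeastLessThan by (rule det_0_iff_vec_prod_zero) simp
  also have "\<dots> \<longleftrightarrow> \<not> trivial_kernel_on {0..<n} f"
  proof
    assume "\<exists>v. v \<in> carrier_vec n \<and> v \<noteq> 0\<^sub>v n \<and> ?M *\<^sub>v v = 0\<^sub>v n"
    then obtain v where v: "v \<in> carrier_vec n" "v \<noteq> 0\<^sub>v n" "?M *\<^sub>v v = 0\<^sub>v n" by blast
    then have "\<forall>i\<in>{0..<n}. (\<Sum>j\<in>{0..<n}. f i j * v $ j) = 0"
      by (auto simp: mult vec_eq_iff)
    moreover have "\<exists>j\<in>{0..<n}. v $ j \<noteq> 0"
      using v by (auto simp: vec_eq_iff)
    ultimately show "\<not> trivial_kernel_on {0..<n} f"
      unfolding trivial_kernel_on_def by blast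
  next
    assume "\<not> trivial_kernel_on {0..<n} f"
    then obtain z j where z: "\<forall>i\<in>{0..<n}. (\<Sum>j\<in>{0..<n}. f i j * z j) = 0" and j: "j < n" "z j \<noteq> 0"
      unfolding trivial_kernel_on_def by auto
    then show "\<exists>v. v \<in> carrier_vec n \<and> v \<noteq> 0\<^sub>v n \<and> ?M *\<^sub>v v = 0\<^sub>v n"
      by (intro exI[of _ "Matrix.vec n z"]) (auto simp: mult vec_eq_iff)
  qed
  finally show ?thesis by blast
qed

lemma det_on_nonzero_iff:
  assumes "finite A"
  shows "det_on A f \<noteq> 0 \<longleftrightarrow> trivial_kernel_on A f"
proof -
  obtain e where e: "bij_betw e {0..<card A} A"
    using ex_bij_betw_nat_finite[OF assms] by blast
  then show ?thesis
    by (simp add: det_on_reindex trivial_kernel_on_reindex det_on_atLeastLessThan_nonzero_iff)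
qed

lemma block_triangular_solution:
  assumes "finite A" and "A0 \<subseteq> A"
    and zero: "\<And>i j. i \<in> A - A0 \<Longrightarrow> j \<in> A0 \<Longrightarrow> f i j = 0"
    and det: "det_on (A - A0) f \<noteq> 0"
    and sol: "\<And>i. i \<in> A \<Longrightarrow> (\<Sum>j\<in>A. f i j * z j) = b i"
    and b: "\<And>i. i \<in> A - A0 \<Longrightarrow> b i = 0"
  shows "\<forall>j\<in>A - A0. z j = 0" and "\<forall>i\<in>A0. (\<Sum>j\<in>A0. f i j * z j) = b i"
proof -
  have split: "(\<Sum>j\<in>A. f i j * z j) = (\<Sum>j\<in>A0. f i j * z j) + (\<Sum>j\<in>A - A0. f i j * z j)" for i
    using sum.subset_diff[OF \<open>A0 \<subseteq> A\<close> \<open>finite A\<close>] by (simp add: add.commute)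
  have ker: "trivial_kernel_on (A - A0) f"
    using det \<open>finite A\<close> by (simp add: det_on_nonzero_iff)
  show new: "\<forall>j\<in>A - A0. z j = 0"
  proof (rule ballI, rule trivial_kernel_onD[OF ker])
    fix i assume "i \<in> A - A0"
    then show "(\<Sum>j\<in>A - A0. f i j * z j) = 0"
      using sol[of i] b[of i] zero[of i] split[of i] by simp
  qed
  show "\<forall>i\<in>A0. (\<Sum>j\<in>A0. f i j * z j) = b i"
    using sol split new \<open>A0 \<subseteq> A\<close> by auto
qed

lemma det_on_block_triangular_nonzero:
  assumes "finite A" and "A0 \<subseteq> A"
    and zero: "\<And>i j. i \<in> A - A0 \<Longrightarrow> j \<in> A0 \<Longrightarrow> f i j = 0"
    and "det_on A0 f \<noteq> 0" and "det_on (A - A0) f \<noteq> 0"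
  shows "det_on A f \<noteq> 0"
  unfolding det_on_nonzero_iff[OF \<open>finite A\<close>] trivial_kernel_on_def
proof (intro allI impI ballI)
  fix z j assume "\<forall>i\<in>A. (\<Sum>j\<in>A. f i j * z j) = 0" and j: "j \<in> A"
  then have new: "\<forall>j\<in>A - A0. z j = 0" and old: "\<forall>i\<in>A0. (\<Sum>j\<in>A0. f i j * z j) = 0"
    using block_triangular_solution[OF assms(1-3,5), of z "\<lambda>_. 0"] by auto
  have "trivial_kernel_on A0 f"
    using assms(4) \<open>finite A\<close> \<open>A0 \<subseteq> A\<close> by (simp add: det_on_nonzero_iff finite_subset)
  then have "\<forall>j\<in>A0. z j = 0"
    using old by (simp add: trivial_kernel_on_def)
  then show "z j = 0"
    using new j by blast
qed

locale nonsingular_child_selection =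
  fixes E0 E1 :: "'e set" and M0 M1 :: "'m set"
    and y0 yb0 y1 yb1 :: "'e \<Rightarrow> 'm \<Rightarrow> real" and J :: "'m \<Rightarrow> 'e"
  assumes finite_E1: "finite E1" and finite_M1: "finite M1"
    and augmentation: "augmentation E1 M1 y1 yb1 E0 M0 y0 yb0"
    and child_selection: "partial_child_selection E1 M1 y1 E0 M0 J"
    and det_child_block: "det_on (M1 - M0) (\<lambda>m m'. stoich y1 yb1 m (J m')) \<noteq> 0"
begin

lemma E0_subset: "E0 \<subseteq> E1" and M0_subset: "M0 \<subseteq> M1"
  using augmentation by (auto simp: augmentation_def)

lemma J_new: "m \<in> M1 - M0 \<Longrightarrow> J m \<in> E1 - E0"
  using child_selection by (auto simp: partial_child_selection_def)

lemma stoich_old: "m \<in> M0 \<Longrightarrow> j \<in> E0 \<Longrightarrow> stoich y1 yb1 m j = stoich y0 yb0 m j"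
  using augmentation by (simp add: augmentation_def stoich_def)

lemma stoich_new_old: "m \<in> M1 - M0 \<Longrightarrow> j \<in> E0 \<Longrightarrow> stoich y1 yb1 m j = 0"
  using augmentation by (simp add: augmentation_def stoich_def)

lemma trivial_kernel_child_block: "trivial_kernel_on (M1 - M0) (\<lambda>m m'. stoich y1 yb1 m (J m'))"
  using det_child_block finite_M1 by (simp add: det_on_nonzero_iff)

lemma sum_M1: "(\<Sum>m\<in>M1. g m) = (\<Sum>m\<in>M0. g m) + (\<Sum>m\<in>M1 - M0. g m)"
  using sum.subset_diff[OF M0_subset finite_M1] by (simp add: add.commute)

lemma sum_E1: "(\<Sum>j\<in>E1. g j) = (\<Sum>j\<in>E0. g j) + (\<Sum>j\<in>E1 - E0. g j)"
  using sum.subset_diff[OF E0_subset finite_E1] by (simp add: add.commute)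

lemma full_row_rank_augmentation:
  assumes "full_row_rank E0 M0 (stoich y0 yb0)"
  shows "full_row_rank E1 M1 (stoich y1 yb1)"
  unfolding full_row_rank_def
proof (intro allI impI)
  fix c assume c: "\<forall>j\<in>E1. (\<Sum>m\<in>M1. c m * stoich y1 yb1 m j) = 0"
  have "\<forall>j\<in>E0. (\<Sum>m\<in>M0. c m * stoich y0 yb0 m j) = 0"
  proof
    fix j assume j: "j \<in> E0"
    have "(\<Sum>m\<in>M0. c m * stoich y0 yb0 m j) = (\<Sum>m\<in>M0. c m * stoich y1 yb1 m j)"
      using j by (intro sum.cong) (simp_all add: stoich_old)
    also have "\<dots> = (\<Sum>m\<in>M1. c m * stoich y1 yb1 m j)"
      using j by (simp add: sum_M1 stoich_new_old)
    also have "\<dots> = 0"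
      using c j E0_subset by auto
    finally show "(\<Sum>m\<in>M0. c m * stoich y0 yb0 m j) = 0" .
  qed
  then have old: "\<forall>m\<in>M0. c m = 0"
    using assms by (simp add: full_row_rank_def)
  have "\<forall>m\<in>M1 - M0. (\<Sum>m'\<in>M1 - M0. stoich y1 yb1 m' (J m) * c m') = 0"
  proof
    fix m assume m: "m \<in> M1 - M0"
    have "(\<Sum>m'\<in>M0. c m' * stoich y1 yb1 m' (J m)) = 0"
      using old by simp
    then show "(\<Sum>m'\<in>M1 - M0. stoich y1 yb1 m' (J m) * c m') = 0"
      using c J_new[OF m] by (auto simp: sum_M1 mult.commute)
  qed
  moreover have "trivial_kernel_on (M1 - M0) (\<lambda>m m'. stoich y1 yb1 m' (J m))"
    using det_child_block finite_M1
    by (simp add: det_on_nonzero_iff[symmetric] det_on_transpose[of _ "\<lambda>m m'. stoich y1 yb1 m (J m')"])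
  ultimately have "\<forall>m\<in>M1 - M0. c m = 0"
    by (simp add: trivial_kernel_on_def)
  with old show "\<forall>m\<in>M1. c m = 0"
    by blast
qed

definition augment_rates :: "('e \<Rightarrow> 'm \<Rightarrow> real) \<Rightarrow> 'e \<Rightarrow> 'm \<Rightarrow> real" where
  "augment_rates r j m = r j m + (if m \<in> M1 - M0 \<and> j = J m then 1 else 0)"

lemma augment_rates_old:
  "j \<in> E0 \<Longrightarrow> augment_rates r j m = r j m"
  using J_new by (auto simp: augment_rates_def)

lemma augment_rates_new:
  assumes "rate_assign E0 M0 y0 r" and "j \<notin> E0"
  shows "augment_rates r j m = (if m \<in> M1 - M0 \<and> j = J m then 1 else 0)"
  using assms by (simp add: augment_rates_def rate_assign_def)

lemma rate_assign_augment_rates: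
  assumes "rate_assign E0 M0 y0 r"
  shows "rate_assign E1 M1 y1 (augment_rates r)"
  unfolding rate_assign_def
proof (intro allI impI)
  fix j m assume not_dep: "\<not> (j \<in> E1 \<and> m \<in> M1 \<and> vdash y1 m j)"
  have "r j m = 0"
  proof (rule ccontr)
    assume "r j m \<noteq> 0"
    then have "j \<in> E0 \<and> m \<in> M0 \<and> vdash y0 m j"
      using assms by (auto simp: rate_assign_def)
    then show False
      using not_dep augmentation E0_subset M0_subset by (auto simp: vdash_def augmentation_def)
  qed
  moreover have "\<not> (m \<in> M1 - M0 \<and> j = J m)"
    using not_dep J_new child_selection by (auto simp: partial_child_selection_def)
  ultimately show "augment_rates r j m = 0"
    by (simp add: augment_rates_def)
qed

lemma stoich_mult_augment_rates:
  assumes "rate_assign E0 M0 y0 r"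
  shows "(\<Sum>j\<in>E1. stoich y1 yb1 m j * augment_rates r j m')
    = (\<Sum>j\<in>E0. stoich y1 yb1 m j * r j m') + (if m' \<in> M1 - M0 then stoich y1 yb1 m (J m') else 0)"
proof -
  have "(\<Sum>j\<in>E1 - E0. stoich y1 yb1 m j * augment_rates r j m')
      = (\<Sum>j\<in>E1 - E0. if j = J m' then (if m' \<in> M1 - M0 then stoich y1 yb1 m j else 0) else 0)"
    using assms by (intro sum.cong) (auto simp: augment_rates_new)
  also have "\<dots> = (if m' \<in> M1 - M0 then stoich y1 yb1 m (J m') else 0)"
    using finite_E1 J_new by (simp add: sum.delta')
  finally show ?thesis
    by (simp add: sum_E1 augment_rates_old)
qed

lemma det_stoich_augment_rates_nonzero:
  assumes "rate_assign E0 M0 y0 r"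
    and "det_on M0 (\<lambda>m m'. \<Sum>j\<in>E0. stoich y0 yb0 m j * r j m') \<noteq> 0"
  shows "det_on M1 (\<lambda>m m'. \<Sum>j\<in>E1. stoich y1 yb1 m j * augment_rates r j m') \<noteq> 0"
proof (rule det_on_block_triangular_nonzero[OF finite_M1 M0_subset])
  show "(\<Sum>j\<in>E1. stoich y1 yb1 m j * augment_rates r j m') = 0" if "m \<in> M1 - M0" "m' \<in> M0" for m m'
    using that by (simp add: stoich_mult_augment_rates[OF assms(1)] stoich_new_old)
  have "det_on M0 (\<lambda>m m'. \<Sum>j\<in>E1. stoich y1 yb1 m j * augment_rates r j m')
      = det_on M0 (\<lambda>m m'. \<Sum>j\<in>E0. stoich y0 yb0 m j * r j m')"
    by (rule det_on_cong) (simp add: stoich_mult_augment_rates[OF assms(1)] stoich_old)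
  with assms(2) show "det_on M0 (\<lambda>m m'. \<Sum>j\<in>E1. stoich y1 yb1 m j * augment_rates r j m') \<noteq> 0"
    by simp
  have "det_on (M1 - M0) (\<lambda>m m'. \<Sum>j\<in>E1. stoich y1 yb1 m j * augment_rates r j m')
      = det_on (M1 - M0) (\<lambda>m m'. stoich y1 yb1 m (J m'))"
    by (rule det_on_cong) (simp add: stoich_mult_augment_rates[OF assms(1)] stoich_new_old)
  with det_child_block show "det_on (M1 - M0) (\<lambda>m m'. \<Sum>j\<in>E1. stoich y1 yb1 m j * augment_rates r j m') \<noteq> 0"
    by simp
qed

lemma regular_augmentation:
  assumes "regular E0 M0 y0 yb0"
  shows "regular E1 M1 y1 yb1"
proof -
  obtain r where r: "rate_assign E0 M0 y0 r"
    and det: "det_on M0 (\<lambda>m m'. \<Sum>j\<in>E0. stoich y0 yb0 m j * r j m') \<noteq> 0"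
    using assms by (auto simp: regular_def)
  show ?thesis
    using assms full_row_rank_augmentation rate_assign_augment_rates[OF r]
      det_stoich_augment_rates_nonzero[OF r det]
    by (auto simp: regular_def)
qed

lemma Bmat_augment_rates_old:
  assumes "\<gamma> \<in> E0 <+> M0" and "\<delta> \<in> E0 <+> M0"
  shows "Bmat y1 yb1 (augment_rates r) \<gamma> \<delta> = Bmat y0 yb0 r \<gamma> \<delta>"
  using assms by (cases \<gamma>; cases \<delta>) (auto simp: augment_rates_old stoich_old)

lemma Bmat_augment_rates_new_old:
  assumes "rate_assign E0 M0 y0 r"
    and "\<gamma> \<in> (E1 <+> M1) - (E0 <+> M0)" and "\<delta> \<in> E0 <+> M0"
  shows "Bmat y1 yb1 (augment_rates r) \<gamma> \<delta> = 0"
proof (cases \<gamma>)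
  case (Inl k)
  with assms(2) have "k \<notin> E0" by auto
  with Inl assms(3) show ?thesis
    by (cases \<delta>) (auto simp: augment_rates_new[OF assms(1)])
next
  case (Inr m)
  with assms(2) have "m \<in> M1 - M0" by auto
  with Inr assms(3) show ?thesis
    by (cases \<delta>) (auto simp: stoich_new_old)
qed

lemma det_Bmat_augment_rates_new_block_nonzero:
  assumes r: "rate_assign E0 M0 y0 r"
  shows "det_on ((E1 <+> M1) - (E0 <+> M0)) (Bmat y1 yb1 (augment_rates r)) \<noteq> 0"
proof -
  let ?B = "Bmat y1 yb1 (augment_rates r)" and ?N = "(E1 - E0) <+> (M1 - M0)"
  have new: "(E1 <+> M1) - (E0 <+> M0) = ?N"
    by auto
  have "trivial_kernel_on ?N ?B"
    unfolding trivial_kernel_on_def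
  proof (intro allI impI)
    fix z assume ker: "\<forall>\<gamma>\<in>?N. (\<Sum>\<delta>\<in>?N. ?B \<gamma> \<delta> * z \<delta>) = 0"
    have reaction: "z (Inl k) = (\<Sum>m\<in>M1 - M0. if J m = k then z (Inr m) else 0)" if k: "k \<in> E1 - E0" for k
    proof -
      have "?B (Inl k) (Inl k') * z (Inl k') = (if k' = k then - z (Inl k) else 0)" for k'
        by auto
      moreover have "?B (Inl k) (Inr m) * z (Inr m) = (if J m = k then z (Inr m) else 0)" if "m \<in> M1 - M0" for m
        using that k r by (auto simp: augment_rates_new)
      ultimately have "(\<Sum>\<delta>\<in>?N. ?B (Inl k) \<delta> * z \<delta>) = - z (Inl k) + (\<Sum>m\<in>M1 - M0. if J m = k then z (Inr m) else 0)"
        using k finite_E1 finite_M1 by (simp add: sum.Plus)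
      moreover have "Inl k \<in> ?N"
        using k by auto
      ultimately show ?thesis
        using ker by simp
    qed
    have child: "(\<Sum>m'\<in>M1 - M0. stoich y1 yb1 m (J m') * z (Inr m')) = 0" if m: "m \<in> M1 - M0" for m
    proof -
      have "Inr m \<in> ?N"
        using m by auto
      then have "0 = (\<Sum>k\<in>E1 - E0. stoich y1 yb1 m k * z (Inl k))"
        using ker[rule_format, OF \<open>Inr m \<in> ?N\<close>] finite_E1 finite_M1 by (simp add: sum.Plus)
      also have "\<dots> = (\<Sum>k\<in>E1 - E0. \<Sum>m'\<in>M1 - M0. if k = J m' then stoich y1 yb1 m k * z (Inr m') else 0)"
        by (intro sum.cong refl) (auto simp: reaction sum_distrib_left intro: sum.cong)
      also have "\<dots> = (\<Sum>m'\<in>M1 - M0. stoich y1 yb1 m (J m') * z (Inr m'))"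
        using J_new finite_E1 by (subst sum.swap) (simp add: sum.delta')
      finally show ?thesis by simp
    qed
    have "\<forall>m\<in>M1 - M0. z (Inr m) = 0"
      using trivial_kernel_onD[OF trivial_kernel_child_block, where z = "\<lambda>m. z (Inr m)"] child by blast
    then have "\<forall>k\<in>E1 - E0. z (Inl k) = 0"
      by (simp add: reaction sum.neutral)
    with \<open>\<forall>m\<in>M1 - M0. z (Inr m) = 0\<close> show "\<forall>\<delta>\<in>?N. z \<delta> = 0"
      by auto
  qed
  then show ?thesis
    using finite_E1 finite_M1 by (simp add: new det_on_nonzero_iff)
qed

lemma influence_augmentation:
  assumes "j \<in> E0" and "influence E0 M0 y0 yb0 (Inl j) \<alpha>"
  shows "influence E1 M1 y1 yb1 (Inl j) \<alpha>"
proof -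
  obtain r where r: "rate_assign E0 M0 y0 r"
    and det0: "det_on (E0 <+> M0) (Bmat y0 yb0 r) \<noteq> 0"
    and sol0: "\<And>z. \<forall>\<gamma>\<in>E0 <+> M0. (\<Sum>\<delta>\<in>E0 <+> M0. Bmat y0 yb0 r \<gamma> \<delta> * z \<delta>) = (if \<gamma> = Inl j then -1 else 0)
        \<Longrightarrow> z \<alpha> \<noteq> 0"
    and \<alpha>: "\<alpha> \<in> E0 <+> M0"
    using assms(2) unfolding influence_def by blast
  let ?B = "Bmat y1 yb1 (augment_rates r)"
  have fin: "finite (E1 <+> M1)" and sub: "E0 <+> M0 \<subseteq> E1 <+> M1"
    using finite_E1 finite_M1 E0_subset M0_subset by auto
  note zero = Bmat_augment_rates_new_old[OF r]
  note new_block = det_Bmat_augment_rates_new_block_nonzero[OF r]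
  have "det_on (E0 <+> M0) ?B = det_on (E0 <+> M0) (Bmat y0 yb0 r)"
    by (rule det_on_cong) (rule Bmat_augment_rates_old)
  with det0 have "det_on (E1 <+> M1) ?B \<noteq> 0"
    by (intro det_on_block_triangular_nonzero[OF fin sub zero _ new_block]) simp_all
  moreover have "z \<alpha> \<noteq> 0"
    if sol1: "\<forall>\<gamma>\<in>E1 <+> M1. (\<Sum>\<delta>\<in>E1 <+> M1. ?B \<gamma> \<delta> * z \<delta>) = (if \<gamma> = Inl j then -1 else 0)" for z
  proof -
    have "\<forall>\<gamma>\<in>E0 <+> M0. (\<Sum>\<delta>\<in>E0 <+> M0. ?B \<gamma> \<delta> * z \<delta>) = (if \<gamma> = Inl j then -1 else 0)"
      using sol1 assms(1) by (intro block_triangular_solution(2)[OF fin sub zero new_block]) auto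
    then show ?thesis
      using sol0 by (simp add: Bmat_augment_rates_old)
  qed
  ultimately show ?thesis
    unfolding influence_def using rate_assign_augment_rates[OF r] \<alpha> sub assms(1) by blast
qed

end

theorem theorem5p1:
  fixes E0 E1 :: "'e set" and M0 M1 :: "'m set"
    and y0 yb0 y1 yb1 :: "'e \<Rightarrow> 'm \<Rightarrow> real" and J :: "'m \<Rightarrow> 'e"
  assumes "network E0 M0 y0 yb0" and "network E1 M1 y1 yb1"
    and "augmentation E1 M1 y1 yb1 E0 M0 y0 yb0"
    and "regular E0 M0 y0 yb0"
    and "partial_child_selection E1 M1 y1 E0 M0 J"
    and "det_on (M1 - M0) (\<lambda>m m'. stoich y1 yb1 m (J m')) \<noteq> 0"
  shows "regular E1 M1 y1 yb1 \<and>
    (\<forall>j\<in>E0. \<forall>\<alpha>\<in>E0 <+> M0.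
       influence E0 M0 y0 yb0 (Inl j) \<alpha> \<longrightarrow> influence E1 M1 y1 yb1 (Inl j) \<alpha>)"
proof -
  interpret nonsingular_child_selection E0 E1 M0 M1 y0 yb0 y1 yb1 J
    using assms(2,3,5,6) by unfold_locales (auto simp: network_def)
  show ?thesis
    using regular_augmentation[OF assms(4)] influence_augmentation by blast
qed

end
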